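(* Let $M$ be a matroid and let $M^{\mathrm{fin}}$ be its finitarization. Suppose $F$ is a base of $M^{\mathrm{fin}}$ and $B_1$, $B_2$ are bases of $M$ with $B_1\subseteq F$ and $B_2\subseteq F$. Then $|F\setminus B_1|=|F\setminus B_2|$, where all infinite cardinalities are regarded as equal.
   Context: A matroid $M=(E,\mathcal{L})$ consists of a (possibly infinite) set $E$ and a family $\mathcal{L}\subseteq 2^E$ of independent sets such that: (I1) $\emptyset\in\mathcal{L}$; (I2) subsets of independent sets are independent; (I3) if $B$ is a maximal element of $\mathcal{L}$ and $A\in\mathcal{L}$ is not maximal, there is $b\in B\setminus A$ with $A\cup\{b\}\in\mathcal{L}$; (I4) if $A\in\mathcal{L}$ and $A\subseteq X\subseteq E$, then $\{S\in\mathcal{L}: A\subseteq S\subseteq X\}$ has a maximal element (w.r.t. inclusion). Bases are the maximal independent sets. The finitarization of $M$ is $M^{\mathrm{fin}}=(E,\mathcal{L}^{\mathrm{fin}})$, where $\mathcal{L}^{\mathrm{fin}}$ consists of all $S\subseteq E$ every finite subset of which lies in $\mathcal{L}$; $M^{\mathrm{fin}}$ is a matroid. Convention: in comparing cardinalities, all infinite cardinalities are treated as a single value $\infty$. *)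

theory Defs
  imports Main "HOL-Library.Extended_Nat"
begin

definition is_base :: "'a set set \<Rightarrow> 'a set \<Rightarrow> bool" where
  "is_base L B \<longleftrightarrow> B \<in> L \<and> (\<forall>S\<in>L. B \<subseteq> S \<longrightarrow> S = B)"

definition matroid :: "'a set \<Rightarrow> 'a set set \<Rightarrow> bool" where
  "matroid E L \<longleftrightarrow>
     (\<forall>S\<in>L. S \<subseteq> E) \<and>
     {} \<in> L \<and>
     (\<forall>A B. A \<in> L \<longrightarrow> B \<subseteq> A \<longrightarrow> B \<in> L) \<and>
     (\<forall>A B. is_base L B \<longrightarrow> A \<in> L \<longrightarrow> \<not> is_base L A \<longrightarrow>
        (\<exists>b\<in>B - A. insert b A \<in> L)) \<and>
     (\<forall>A X. A \<in> L \<longrightarrow> A \<subseteq> X \<longrightarrow> X \<subseteq> E \<longrightarrow>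
        (\<exists>M\<in>{S\<in>L. A \<subseteq> S \<and> S \<subseteq> X}. \<forall>S\<in>{S\<in>L. A \<subseteq> S \<and> S \<subseteq> X}. M \<subseteq> S \<longrightarrow> S = M))"

definition fin_indep :: "'a set \<Rightarrow> 'a set set \<Rightarrow> 'a set set" where
  "fin_indep E L = {S. S \<subseteq> E \<and> (\<forall>T. T \<subseteq> S \<longrightarrow> finite T \<longrightarrow> T \<in> L)}"

definition ecard :: "'a set \<Rightarrow> enat" where
  "ecard X = (if finite X then enat (card X) else \<infinity>)"

end

theory Submission
  imports Defs
begin

text \<open>Any two bases B1, B2 of a matroid satisfy |B1 - B2| = |B2 - B1|: exchanging one element of
  B1 - B2 for one of B2 - B1 gives a base closer to B2, so induction on |B2 - B1| applies when it
  is finite, and by symmetry both differences are infinite otherwise. Since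
  F - Bi is the disjoint union of F - B1 - B2 with B(3-i) - Bi, the claim follows.\<close>

lemma ecard_Un_disjoint:
  assumes "A \<inter> B = {}"
  shows "ecard (A \<union> B) = ecard A + ecard B"
  using assms by (simp add: ecard_def card_Un_disjoint)

lemma ecard_diff_eq_if_ecard_swap_eq:
  assumes "B1 \<subseteq> F" "B2 \<subseteq> F" "ecard (B1 - B2) = ecard (B2 - B1)"
  shows "ecard (F - B1) = ecard (F - B2)"
proof -
  define C where "C = F - B1 - B2"
  have "F - B1 = C \<union> (B2 - B1)" "F - B2 = C \<union> (B1 - B2)"
    using assms(1,2) by (auto simp: C_def)
  moreover have "C \<inter> (B2 - B1) = {}" "C \<inter> (B1 - B2) = {}"
    by (auto simp: C_def)
  ultimately show ?thesis
    using assms(3) by (simp add: ecard_Un_disjoint add.commute)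
qed

lemma base_in_indep: "is_base L B \<Longrightarrow> B \<in> L"
  by (simp add: is_base_def)

lemma base_exchange:
  assumes m: "matroid E L" and B1: "is_base L B1" and B2: "is_base L B2"
    and x: "x \<in> B1" "x \<notin> B2"
  obtains b where "b \<in> B2 - B1" "is_base L (insert b (B1 - {x}))"
proof -
  have down_closed: "\<And>A B. A \<in> L \<Longrightarrow> B \<subseteq> A \<Longrightarrow> B \<in> L"
    and augment: "\<And>A B. is_base L B \<Longrightarrow> A \<in> L \<Longrightarrow> \<not> is_base L A \<Longrightarrow> \<exists>b\<in>B - A. insert b A \<in> L"
    using m unfolding matroid_def by blast+
  have "B1 - {x} \<in> L"
    using down_closed[OF base_in_indep[OF B1]] by blast
  moreover have "\<not> is_base L (B1 - {x})"
    using B1 x(1) unfolding is_base_def by blast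
  ultimately obtain b where b: "b \<in> B2 - (B1 - {x})" "insert b (B1 - {x}) \<in> L"
    using augment[OF B2] by blast
  have b_new: "b \<in> B2 - B1"
    using b(1) x by auto
  define B1' where "B1' = insert b (B1 - {x})"
  have "B1' \<in> L"
    using b(2) by (simp add: B1'_def)
  have "is_base L B1'"
  proof (rule ccontr)
    assume "\<not> is_base L B1'"
    then obtain c where c: "c \<in> B1 - B1'" "insert c B1' \<in> L"
      using augment[OF B1 \<open>B1' \<in> L\<close>] by blast
    have "insert c B1' = insert b B1"
      using c(1) x(1) by (auto simp: B1'_def)
    then have "insert b B1 = B1"
      using B1 c(2) unfolding is_base_def by blast
    with b_new show False by auto
  qed
  with b_new show thesis
    using that by (simp add: B1'_def)
qed

lemma card_diff_bases_eq:
  assumes m: "matroid E L"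
  shows "is_base L B1 \<Longrightarrow> is_base L B2 \<Longrightarrow> finite (B2 - B1) \<Longrightarrow>
    finite (B1 - B2) \<and> card (B1 - B2) = card (B2 - B1)"
proof (induction "card (B2 - B1)" arbitrary: B1)
  case 0
  then have "B2 \<subseteq> B1" by auto
  with 0 have "B2 = B1" unfolding is_base_def by blast
  then show ?case by simp
next
  case (Suc n)
  have "\<not> B1 \<subseteq> B2"
  proof
    assume "B1 \<subseteq> B2"
    then have "B2 = B1" using Suc.prems(1,2) unfolding is_base_def by blast
    with Suc.hyps(2) show False by simp
  qed
  then obtain x where x: "x \<in> B1" "x \<notin> B2" by auto
  obtain b where b: "b \<in> B2 - B1" and base': "is_base L (insert b (B1 - {x}))"
    using base_exchange[OF m Suc.prems(1,2) x] .
  define B1' where "B1' = insert b (B1 - {x})"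
  have diff_new: "B2 - B1' = (B2 - B1) - {b}"
    and diff_old: "B1 - B2 = insert x (B1' - B2)" "x \<notin> B1' - B2"
    using x b by (auto simp: B1'_def)
  have "is_base L B1'"
    using base' by (simp add: B1'_def)
  moreover have "n = card (B2 - B1')" "finite (B2 - B1')"
    using diff_new Suc.hyps(2) Suc.prems(3) b by simp_all
  ultimately have "finite (B1' - B2) \<and> card (B1' - B2) = n"
    using Suc.hyps(1)[of B1'] Suc.prems(2) by simp
  then show ?case
    using diff_old Suc.hyps(2) by simp
qed

lemma ecard_diff_bases_eq:
  assumes "matroid E L" "is_base L B1" "is_base L B2"
  shows "ecard (B1 - B2) = ecard (B2 - B1)"
proof (cases "finite (B2 - B1)")
  case True
  then show ?thesis
    using card_diff_bases_eq[OF assms] by (simp add: ecard_def)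
next
  case False
  then have "infinite (B1 - B2)"
    using card_diff_bases_eq[OF assms(1,3,2)] by blast
  with False show ?thesis
    by (simp add: ecard_def)
qed

theorem theorem3p1p2:
  fixes E :: "'a set" and L :: "'a set set" and F B1 B2 :: "'a set"
  assumes "matroid E L"
    and "is_base (fin_indep E L) F"
    and "is_base L B1" and "is_base L B2"
    and "B1 \<subseteq> F" and "B2 \<subseteq> F"
  shows "ecard (F - B1) = ecard (F - B2)"
  using ecard_diff_eq_if_ecard_swap_eq[OF assms(5,6) ecard_diff_bases_eq[OF assms(1,3,4)]] .

end
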